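(* Let $X \subseteq \mathbb{P}^1 \times \mathbb{P}^1$ be any finite set of points, and let $I_X = \bigcap_{P \in X} I_P \subseteq k[x_0,x_1,x_2,x_3]$. Then $I_X$ (viewed as the ideal of a union of lines in $\mathbb{P}^3$ via the standard grading) is a local complete intersection.
   Context: $k$ is an algebraically closed field of characteristic zero. The coordinate ring of $\mathbb{P}^1\times\mathbb{P}^1$ is $S = k[x_0,x_1,x_2,x_3]$ with bigrading $\deg x_0 = \deg x_1 = (1,0)$, $\deg x_2 = \deg x_3 = (0,1)$. A point $P = [a_0:a_1]\times[b_0:b_1]$ has ideal $I_P = (a_1x_0 - a_0x_1,\ b_1x_2 - b_0x_3)$. An ideal $I \subseteq S$ of height $c$ is a local complete intersection if for every prime $\mathfrak{p} \neq (x_0,\ldots,x_3)$ with $I\subseteq\mathfrak{p}$, $I_{\mathfrak{p}}$ is a complete intersection of codimension $c$. *)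

theory Defs
  imports "HOL-Computational_Algebra.Polynomial" "HOL-Library.Extended_Nat"
begin

text \<open>The polynomial ring S = k[x0,x1,x2,x3], realised as iterated univariate
  polynomials: x3 is the outermost variable, x0 the innermost one.\<close>

type_synonym 'k S4 = "'k poly poly poly poly"

definition cst :: "'k::field \<Rightarrow> 'k S4" where
  "cst c = [:[:[:[:c:]:]:]:]"

definition x0 :: "'k::field S4" where "x0 = [:[:[:[:0, 1:]:]:]:]"
definition x1 :: "'k::field S4" where "x1 = [:[:[:0, 1:]:]:]"
definition x2 :: "'k::field S4" where "x2 = [:[:0, 1:]:]"
definition x3 :: "'k::field S4" where "x3 = [:0, 1:]"

definition is_ideal :: "'a::comm_ring_1 set \<Rightarrow> bool" where
  "is_ideal I \<longleftrightarrow> 0 \<in> I \<and> (\<forall>a\<in>I. \<forall>b\<in>I. a + b \<in> I) \<and> (\<forall>a\<in>I. \<forall>r. r * a \<in> I)"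

definition is_prime_ideal :: "'a::comm_ring_1 set \<Rightarrow> bool" where
  "is_prime_ideal P \<longleftrightarrow> is_ideal P \<and> P \<noteq> UNIV \<and> (\<forall>a b. a * b \<in> P \<longrightarrow> a \<in> P \<or> b \<in> P)"

definition ideal_gen :: "'a::comm_ring_1 set \<Rightarrow> 'a set" where
  "ideal_gen G = \<Inter>{I. is_ideal I \<and> G \<subseteq> I}"

definition prime_chain :: "'a::comm_ring_1 set list \<Rightarrow> bool" where
  "prime_chain Ps \<longleftrightarrow> Ps \<noteq> [] \<and> (\<forall>Q\<in>set Ps. is_prime_ideal Q) \<and>
     (\<forall>i. Suc i < length Ps \<longrightarrow> Ps ! i \<subset> Ps ! Suc i)"

definition prime_height :: "'a::comm_ring_1 set \<Rightarrow> enat" where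
  "prime_height P = (SUP Ps \<in> {Ps. prime_chain Ps \<and> last Ps = P}. enat (length Ps - 1))"

text \<open>Height of an ideal: minimum height of a prime containing it
  (\<infinity> for the unit ideal).\<close>
definition ideal_height :: "'a::comm_ring_1 set \<Rightarrow> enat" where
  "ideal_height I = (INF Q \<in> {Q. is_prime_ideal Q \<and> I \<subseteq> Q}. prime_height Q)"

text \<open>Height of the localisation I_P in the local ring S_P: primes of S_P containing
  I_P correspond to primes Q of S with I \<subseteq> Q \<subseteq> P, with the same height.\<close>
definition local_height :: "'a::comm_ring_1 set \<Rightarrow> 'a set \<Rightarrow> enat" where
  "local_height I P = (INF Q \<in> {Q. is_prime_ideal Q \<and> I \<subseteq> Q \<and> Q \<subseteq> P}. prime_height Q)"

text \<open>I_P is a complete intersection of codimension c in S_P: I_P is generated by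
  c elements f_1..f_c (which may be taken in I, after clearing unit denominators),
  i.e. I S_P = (f_1,...,f_c) S_P, and ht(I_P) = c.\<close>
definition local_ci :: "'a::comm_ring_1 set \<Rightarrow> 'a set \<Rightarrow> nat \<Rightarrow> bool" where
  "local_ci I P c \<longleftrightarrow>
     (\<exists>F. finite F \<and> card F \<le> c \<and> F \<subseteq> I \<and>
          (\<forall>g\<in>I. \<exists>t. t \<notin> P \<and> t * g \<in> ideal_gen F)) \<and>
     local_height I P = enat c"

definition irrelevant :: "'k::field S4 set" where
  "irrelevant = ideal_gen {x0, x1, x2, x3}"

definition lci :: "'k::field S4 set \<Rightarrow> bool" where
  "lci I \<longleftrightarrow> (\<forall>c. ideal_height I = enat c \<longrightarrow>
     (\<forall>P. is_prime_ideal P \<and> P \<noteq> irrelevant \<and> I \<subseteq> P \<longrightarrow> local_ci I P c))"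

definition point_ideal :: "('k::field \<times> 'k) \<Rightarrow> ('k \<times> 'k) \<Rightarrow> 'k S4 set" where
  "point_ideal a b = ideal_gen {cst (snd a) * x0 - cst (fst a) * x1,
                                 cst (snd b) * x2 - cst (fst b) * x3}"

definition valid_point :: "('k::field \<times> 'k) \<times> ('k \<times> 'k) \<Rightarrow> bool" where
  "valid_point p \<longleftrightarrow> fst p \<noteq> (0, 0) \<and> snd p \<noteq> (0, 0)"

definition points_ideal :: "(('k::field \<times> 'k) \<times> ('k \<times> 'k)) set \<Rightarrow> 'k S4 set" where
  "points_ideal X = (\<Inter>p\<in>X. point_ideal (fst p) (snd p))"

end

theory Submission
  imports Defs "HOL-Computational_Algebra.Factorial_Ring"
begin

text \<open>
  The ideal of a point is generated by a linear form in \<open>x0, x1\<close> and one in \<open>x2, x3\<close>, so a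
  linear change of coordinates carries it to \<open>(x2, x3)\<close>: all point ideals are primes of the
  same height \<open>\<ge> 2\<close>, and by prime avoidance \<open>I\<^sub>X\<close> has that height at every prime containing it.

  Let \<open>P\<close> be a prime other than the irrelevant ideal, say with \<open>x0 \<notin> P\<close> or \<open>x1 \<notin> P\<close>. Two
  non-proportional forms in \<open>x0, x1\<close> cannot both lie in \<open>P\<close>, so the points whose first form lies
  in \<open>P\<close> all lie on one line \<open>L = 0\<close>; the other points disappear after inverting the product of
  their first forms. Distinct forms \<open>m\<^sub>b\<close> in the other pair of variables are pairwise
  non-associated primes modulo \<open>L\<close>, so \<open>\<Inter>\<^sub>b (L, m\<^sub>b) = (L, \<Prod>\<^sub>b m\<^sub>b)\<close>. Hence \<open>I\<^sub>X\<close> is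
  locally generated by two elements.
\<close>

subsection \<open>Ring homomorphisms and substitution\<close>

definition is_ring_hom :: "('a::comm_ring_1 \<Rightarrow> 'b::comm_ring_1) \<Rightarrow> bool" where
  "is_ring_hom h \<longleftrightarrow> (\<forall>a b. h (a + b) = h a + h b) \<and> (\<forall>a b. h (a * b) = h a * h b) \<and> h 1 = 1"

context
  fixes h :: "'a::comm_ring_1 \<Rightarrow> 'b::comm_ring_1"
  assumes hom: "is_ring_hom h"
begin

lemma ring_hom_add: "h (a + b) = h a + h b"
  using hom by (simp add: is_ring_hom_def)

lemma ring_hom_mult: "h (a * b) = h a * h b"
  using hom by (simp add: is_ring_hom_def)

lemma ring_hom_one: "h 1 = 1"
  using hom by (simp add: is_ring_hom_def)

lemma ring_hom_zero: "h 0 = 0"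
  using ring_hom_add[of 0 0] by simp

lemma ring_hom_uminus: "h (- a) = - h a"
  using ring_hom_add[of a "- a"] by (simp add: ring_hom_zero minus_unique)

lemma ring_hom_diff: "h (a - b) = h a - h b"
  using ring_hom_add[of a "- b"] by (simp add: ring_hom_uminus)

lemma ring_hom_sum: "h (sum f A) = (\<Sum>x\<in>A. h (f x))"
  by (induction A rule: infinite_finite_induct) (auto simp: ring_hom_zero ring_hom_add)

lemma ring_hom_prod: "h (prod f A) = (\<Prod>x\<in>A. h (f x))"
  by (induction A rule: infinite_finite_induct) (auto simp: ring_hom_one ring_hom_mult)

end

lemma is_ring_hom_id: "is_ring_hom id"
  by (simp add: is_ring_hom_def)

lemma is_ring_hom_comp: "is_ring_hom g \<Longrightarrow> is_ring_hom h \<Longrightarrow> is_ring_hom (g \<circ> h)"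
  by (simp add: is_ring_hom_def)

definition poly_hom :: "('a::comm_ring_1 \<Rightarrow> 'b::comm_ring_1) \<Rightarrow> 'b \<Rightarrow> 'a poly \<Rightarrow> 'b" where
  "poly_hom h y p = poly (map_poly h p) y"

lemma poly_hom_0 [simp]: "poly_hom h y 0 = 0"
  by (simp add: poly_hom_def)

lemma poly_hom_1 [simp]: "h 1 = 1 \<Longrightarrow> poly_hom h y 1 = 1"
  by (simp add: poly_hom_def map_poly_1)

lemma poly_hom_pCons: "h 0 = 0 \<Longrightarrow> poly_hom h y (pCons a p) = h a + y * poly_hom h y p"
  by (simp add: poly_hom_def map_poly_pCons)

lemma poly_hom_const: "h 0 = 0 \<Longrightarrow> poly_hom h y [:a:] = h a"
  using poly_hom_pCons[of h y a 0] by (simp add: poly_hom_def)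

lemma poly_hom_add: "is_ring_hom h \<Longrightarrow> poly_hom h y (p + q) = poly_hom h y p + poly_hom h y q"
proof -
  assume h: "is_ring_hom h"
  have "map_poly h (p + q) = map_poly h p + map_poly h q"
    by (rule poly_eqI) (simp add: coeff_map_poly ring_hom_zero[OF h] ring_hom_add[OF h])
  then show ?thesis by (simp add: poly_hom_def)
qed

lemma poly_hom_smult: "is_ring_hom h \<Longrightarrow> poly_hom h y (smult a p) = h a * poly_hom h y p"
  by (simp add: poly_hom_def map_poly_smult ring_hom_zero ring_hom_mult)

lemma poly_hom_mult: "is_ring_hom h \<Longrightarrow> poly_hom h y (p * q) = poly_hom h y p * poly_hom h y q"
proof (induction p)
  case 0
  then show ?case by (simp add: poly_hom_def)
next
  case (pCons a p)
  have "poly_hom h y (pCons a p * q) = poly_hom h y (smult a q + pCons 0 (p * q))"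
    by simp
  also have "\<dots> = h a * poly_hom h y q + y * (poly_hom h y p * poly_hom h y q)"
    using pCons by (simp add: poly_hom_add poly_hom_smult poly_hom_pCons ring_hom_zero)
  also have "\<dots> = poly_hom h y (pCons a p) * poly_hom h y q"
    using pCons by (simp add: poly_hom_pCons ring_hom_zero algebra_simps)
  finally show ?case .
qed

lemma is_ring_hom_poly_hom: "is_ring_hom h \<Longrightarrow> is_ring_hom (poly_hom h y)"
  unfolding is_ring_hom_def[of "poly_hom h y"]
  by (auto simp: poly_hom_add poly_hom_mult poly_hom_const ring_hom_zero ring_hom_one
           simp flip: pCons_one)

lemma poly_induct_const_X [case_names const X add mult]:
  fixes p :: "'a::comm_ring_1 poly"
  assumes "\<And>a. Q [:a:]" "Q [:0, 1:]" "\<And>p q. Q p \<Longrightarrow> Q q \<Longrightarrow> Q (p + q)"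
    "\<And>p q. Q p \<Longrightarrow> Q q \<Longrightarrow> Q (p * q)"
  shows "Q p"
proof (induction p)
  case 0
  then show ?case using assms(1)[of 0] by simp
next
  case (pCons a p)
  have "pCons a p = [:a:] + [:0, 1:] * p"
    by (simp add: mult_pCons_left)
  then show ?case using assms pCons.IH by metis
qed

lemma S4_induct [case_names cst x0 x1 x2 x3 add mult]:
  fixes P :: "'k::field S4 \<Rightarrow> bool"
  assumes cst: "\<And>c. P (cst c)" and var: "P x0" "P x1" "P x2" "P x3"
    and closed_add: "\<And>a b. P a \<Longrightarrow> P b \<Longrightarrow> P (a + b)"
    and closed_mult: "\<And>a b. P a \<Longrightarrow> P b \<Longrightarrow> P (a * b)"
  shows "P f"
proof -
  have const3: "P [:[:[:c:]:]:]" for c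
  proof (induction c rule: poly_induct_const_X)
    case (const a) show ?case using cst[of a] by (simp add: cst_def)
  next
    case X show ?case using var(1) by (simp add: x0_def)
  next
    case (add p q) then show ?case using closed_add[of "[:[:[:p:]:]:]" "[:[:[:q:]:]:]"] by simp
  next
    case (mult p q) then show ?case using closed_mult[of "[:[:[:p:]:]:]" "[:[:[:q:]:]:]"] by (simp add: mult.commute)
  qed
  have const2: "P [:[:b:]:]" for b
  proof (induction b rule: poly_induct_const_X)
    case const show ?case by (rule const3)
  next
    case X show ?case using var(2) by (simp add: x1_def)
  next
    case (add p q) then show ?case using closed_add[of "[:[:p:]:]" "[:[:q:]:]"] by simp
  next
    case (mult p q) then show ?case using closed_mult[of "[:[:p:]:]" "[:[:q:]:]"] by (simp add: mult.commute)
  qed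
  have const1: "P [:b:]" for b
  proof (induction b rule: poly_induct_const_X)
    case const show ?case by (rule const2)
  next
    case X show ?case using var(3) by (simp add: x2_def)
  next
    case (add p q) then show ?case using closed_add[of "[:p:]" "[:q:]"] by simp
  next
    case (mult p q) then show ?case using closed_mult[of "[:p:]" "[:q:]"] by (simp add: mult.commute)
  qed
  show ?thesis
    by (induction f rule: poly_induct_const_X) (use const1 var(4) closed_add closed_mult in \<open>simp_all add: x3_def\<close>)
qed

lemma cst_add: "cst (a + b) = cst a + cst b"
  by (simp add: cst_def)

lemma cst_mult: "cst (a * b) = cst a * cst b"
  by (simp add: cst_def mult.commute)

lemma is_ring_hom_cst: "is_ring_hom (cst :: 'k::field \<Rightarrow> 'k S4)"
  by (simp add: is_ring_hom_def cst_add cst_mult cst_def one_pCons)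

lemma cst_0 [simp]: "cst 0 = 0"
  by (simp add: cst_def)

lemma cst_1 [simp]: "cst 1 = 1"
  by (simp add: cst_def one_pCons)

lemma cst_diff: "cst (a - b) = cst a - cst b"
  by (rule ring_hom_diff[OF is_ring_hom_cst])

lemma cst_uminus: "cst (- a) = - cst a"
  by (rule ring_hom_uminus[OF is_ring_hom_cst])

definition var :: "nat \<Rightarrow> 'k::field S4" where
  "var i = (if i = 0 then x0 else if i = 1 then x1 else if i = 2 then x2 else x3)"

lemma less_4_cases: "(i::nat) < 4 \<longleftrightarrow> i = 0 \<or> i = 1 \<or> i = 2 \<or> i = 3"
  by auto

lemma sum_less_4: "(\<Sum>j<4. f j) = f 0 + f 1 + f 2 + f (3::nat)"
  by (simp add: eval_nat_numeral add.commute add.left_commute)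

definition substitute :: "(nat \<Rightarrow> 'k::field S4) \<Rightarrow> 'k S4 \<Rightarrow> 'k S4" where
  "substitute y = poly_hom (poly_hom (poly_hom (poly_hom cst (y 0)) (y 1)) (y 2)) (y 3)"

lemma is_ring_hom_substitute: "is_ring_hom (substitute y)"
  unfolding substitute_def by (intro is_ring_hom_poly_hom is_ring_hom_cst)

lemma substitute_cst [simp]: "substitute y (cst c) = cst c"
  by (simp add: substitute_def cst_def poly_hom_const)

lemma substitute_vars [simp]:
  "substitute y x0 = y 0" "substitute y x1 = y 1" "substitute y x2 = y 2" "substitute y x3 = y 3"
  by (simp_all add: substitute_def x0_def x1_def x2_def x3_def poly_hom_const poly_hom_pCons)

lemma substitute_var: "i < 4 \<Longrightarrow> substitute y (var i) = y i"
  by (auto simp: less_4_cases var_def)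

lemma ring_hom_eqI:
  fixes g h :: "'k::field S4 \<Rightarrow> 'k S4"
  assumes "is_ring_hom g" "is_ring_hom h" "\<And>c. g (cst c) = h (cst c)"
    and "\<And>i. i < 4 \<Longrightarrow> g (var i) = h (var i)"
  shows "g f = h f"
proof (induction f rule: S4_induct)
  case (cst c) show ?case by (rule assms(3))
next
  case x0 show ?case using assms(4)[of 0] by (simp add: var_def)
next
  case x1 show ?case using assms(4)[of 1] by (simp add: var_def)
next
  case x2 show ?case using assms(4)[of 2] by (simp add: var_def)
next
  case x3 show ?case using assms(4)[of 3] by (simp add: var_def)
next
  case (add a b) then show ?case by (simp add: ring_hom_add assms(1,2))
next
  case (mult a b) then show ?case by (simp add: ring_hom_mult assms(1,2))
qed

lemma substitute_substitute:
  "substitute z (substitute y f) = substitute (\<lambda>i. substitute z (y i)) f"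
  by (rule ring_hom_eqI)
    (simp_all add: is_ring_hom_comp[unfolded comp_def] is_ring_hom_substitute substitute_var)

lemma substitute_var_id: "substitute var f = f"
  using ring_hom_eqI[OF is_ring_hom_substitute is_ring_hom_id, of var f] by (simp add: substitute_var)

lemma substitute_cong: "(\<And>i. i < 4 \<Longrightarrow> y i = z i) \<Longrightarrow> substitute y = substitute z"
  unfolding substitute_def by simp

definition eval_at :: "(nat \<Rightarrow> 'k::field) \<Rightarrow> 'k S4 \<Rightarrow> 'k" where
  "eval_at v = poly_hom (poly_hom (poly_hom (poly_hom id (v 0)) (v 1)) (v 2)) (v 3)"

lemma is_ring_hom_eval_at: "is_ring_hom (eval_at v)"
  unfolding eval_at_def by (intro is_ring_hom_poly_hom is_ring_hom_id)

lemma eval_at_cst [simp]: "eval_at v (cst c) = c"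
  by (simp add: eval_at_def cst_def poly_hom_const)

lemma eval_at_vars [simp]:
  "eval_at v x0 = v 0" "eval_at v x1 = v 1" "eval_at v x2 = v 2" "eval_at v x3 = v 3"
  by (simp_all add: eval_at_def x0_def x1_def x2_def x3_def poly_hom_const poly_hom_pCons)

subsection \<open>Linear changes of coordinates\<close>

definition linear_form :: "(nat \<Rightarrow> 'k::field) \<Rightarrow> 'k S4" where
  "linear_form c = (\<Sum>j<4. cst (c j) * var j)"

lemma linear_form_expand:
  "linear_form c = cst (c 0) * x0 + cst (c 1) * x1 + cst (c 2) * x2 + cst (c 3) * x3"
  by (simp add: linear_form_def sum_less_4 var_def)

lemma substitute_linear_form: "substitute y (linear_form c) = (\<Sum>j<4. cst (c j) * y j)"
  by (simp add: linear_form_def ring_hom_sum[OF is_ring_hom_substitute]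
      ring_hom_mult[OF is_ring_hom_substitute] substitute_var)

lemma sum_cst_linear_form:
  fixes c :: "nat \<Rightarrow> 'k::field" and M :: "nat \<Rightarrow> nat \<Rightarrow> 'k"
  shows "(\<Sum>j<4. cst (c j) * linear_form (M j)) = linear_form (\<lambda>k. \<Sum>j<4. c j * M j k)"
proof -
  have "(\<Sum>j<4. cst (c j) * linear_form (M j)) = (\<Sum>j<4. \<Sum>k<4. cst (c j * M j k) * var k)"
    by (simp add: linear_form_def sum_distrib_left cst_mult mult.assoc)
  also have "\<dots> = (\<Sum>k<4. \<Sum>j<4. cst (c j * M j k) * var k)"
    by (rule sum.swap)
  also have "\<dots> = linear_form (\<lambda>k. \<Sum>j<4. c j * M j k)"
    by (simp add: linear_form_def sum_distrib_right ring_hom_sum[OF is_ring_hom_cst])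
  finally show ?thesis .
qed

lemma linear_form_unit: "i < 4 \<Longrightarrow> linear_form (\<lambda>k. if k = i then 1 else 0) = var i"
proof -
  assume i: "i < 4"
  have "linear_form (\<lambda>k. if k = i then 1 else 0) = (\<Sum>k<4. if k = i then var k else 0)"
    unfolding linear_form_def by (rule sum.cong) auto
  also have "\<dots> = var i" using i by simp
  finally show ?thesis .
qed

definition chart :: "(nat \<Rightarrow> nat \<Rightarrow> 'k::field) \<Rightarrow> 'k S4 \<Rightarrow> 'k S4" where
  "chart M = substitute (\<lambda>i. linear_form (M i))"

lemma is_ring_hom_chart: "is_ring_hom (chart M)"
  by (simp add: chart_def is_ring_hom_substitute)

lemma chart_chart:
  assumes "\<And>i k. i < 4 \<Longrightarrow> k < 4 \<Longrightarrow> (\<Sum>j<4. N i j * M j k) = (if k = i then 1 else 0)"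
  shows "chart M (chart N f) = f"
proof -
  have "chart M (chart N f) = substitute (\<lambda>i. chart M (linear_form (N i))) f"
    by (simp add: chart_def substitute_substitute)
  also have "substitute (\<lambda>i. chart M (linear_form (N i))) = substitute var"
  proof (rule substitute_cong)
    fix i :: nat assume i: "i < 4"
    have "chart M (linear_form (N i)) = linear_form (\<lambda>k. \<Sum>j<4. N i j * M j k)"
      by (simp add: chart_def substitute_linear_form sum_cst_linear_form)
    also have "\<dots> = linear_form (\<lambda>k. if k = i then 1 else 0)"
      using assms i by (simp add: linear_form_def)
    also have "\<dots> = var i" using i by (rule linear_form_unit)
    finally show "chart M (linear_form (N i)) = var i" .
  qed
  finally show ?thesis by (simp add: substitute_var_id)
qed

definition inverse_homs :: "('a::comm_ring_1 \<Rightarrow> 'a) \<Rightarrow> ('a \<Rightarrow> 'a) \<Rightarrow> bool" where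
  "inverse_homs \<sigma> \<tau> \<longleftrightarrow> is_ring_hom \<sigma> \<and> is_ring_hom \<tau> \<and> (\<forall>f. \<sigma> (\<tau> f) = f) \<and> (\<forall>f. \<tau> (\<sigma> f) = f)"

lemma inverse_homs_chart:
  assumes "\<And>i k. i < 4 \<Longrightarrow> k < 4 \<Longrightarrow> (\<Sum>j<4. N i j * M j k) = (if k = i then 1 else 0)"
    and "\<And>i k. i < 4 \<Longrightarrow> k < 4 \<Longrightarrow> (\<Sum>j<4. M i j * N j k) = (if k = i then 1 else 0)"
  shows "inverse_homs (chart M) (chart N)"
  using chart_chart[OF assms(1)] chart_chart[OF assms(2)]
  by (simp add: inverse_homs_def is_ring_hom_chart)

definition vanishing_form :: "'k::field S4 \<Rightarrow> 'k S4 \<Rightarrow> 'k \<times> 'k \<Rightarrow> 'k S4" where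
  "vanishing_form u v p = cst (snd p) * u - cst (fst p) * v"

lemma point_ideal_vanishing_forms:
  "point_ideal a b = ideal_gen {vanishing_form x0 x1 a, vanishing_form x2 x3 b}"
  by (simp add: point_ideal_def vanishing_form_def)

lemma substitute_vanishing_form:
  "substitute y (vanishing_form u v p) = vanishing_form (substitute y u) (substitute y v) p"
  by (simp add: vanishing_form_def ring_hom_diff[OF is_ring_hom_substitute]
      ring_hom_mult[OF is_ring_hom_substitute])

text \<open>For \<open>p \<noteq> (0, 0)\<close>, the vector \<open>complement p\<close> completes \<open>(snd p, - fst p)\<close>
  to a basis of \<open>k\<^sup>2\<close>; \<open>complement_det p\<close> is the determinant of that basis up to sign.\<close>
definition complement :: "'k::field \<times> 'k \<Rightarrow> 'k \<times> 'k" where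
  "complement p = (if snd p \<noteq> 0 then (0, 1) else (1, 0))"

definition complement_det :: "'k::field \<times> 'k \<Rightarrow> 'k" where
  "complement_det p = snd p * snd (complement p) + fst p * fst (complement p)"

lemma complement_det_nonzero: "p \<noteq> (0, 0) \<Longrightarrow> complement_det p \<noteq> 0"
  by (cases p) (auto simp: complement_det_def complement_def)

definition mat4 :: "'k list list \<Rightarrow> nat \<Rightarrow> nat \<Rightarrow> 'k" where
  "mat4 L i j = L ! i ! j"

definition swap_mat :: "'k::field \<times> 'k \<Rightarrow> nat \<Rightarrow> nat \<Rightarrow> 'k" where
  "swap_mat a = (let r = complement a in
     mat4 [[0, 0, 1, 0], [0, 0, 0, 1], [fst r, snd r, 0, 0], [snd a, - fst a, 0, 0]])"

definition swap_mat_inv :: "'k::field \<times> 'k \<Rightarrow> nat \<Rightarrow> nat \<Rightarrow> 'k" where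
  "swap_mat_inv a = (let r = complement a; D = complement_det a in
     mat4 [[0, 0, fst a / D, snd r / D], [0, 0, snd a / D, - fst r / D], [1, 0, 0, 0], [0, 1, 0, 0]])"

definition fibre_mat :: "'k::field \<times> 'k \<Rightarrow> nat \<Rightarrow> nat \<Rightarrow> 'k" where
  "fibre_mat a = (let r = complement a in
     mat4 [[1, 0, 0, 0], [0, 1, 0, 0], [0, 0, fst r, snd r], [0, 0, snd a, - fst a]])"

definition fibre_mat_inv :: "'k::field \<times> 'k \<Rightarrow> nat \<Rightarrow> nat \<Rightarrow> 'k" where
  "fibre_mat_inv a = (let r = complement a; D = complement_det a in
     mat4 [[1, 0, 0, 0], [0, 1, 0, 0], [0, 0, fst a / D, snd r / D], [0, 0, snd a / D, - fst r / D]])"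

definition point_mat :: "'k::field \<times> 'k \<Rightarrow> 'k \<times> 'k \<Rightarrow> nat \<Rightarrow> nat \<Rightarrow> 'k" where
  "point_mat a b = (let r = complement a; s = complement b in
     mat4 [[0, 0, fst s, snd s], [fst r, snd r, 0, 0], [0, 0, snd b, - fst b], [snd a, - fst a, 0, 0]])"

definition point_mat_inv :: "'k::field \<times> 'k \<Rightarrow> 'k \<times> 'k \<Rightarrow> nat \<Rightarrow> nat \<Rightarrow> 'k" where
  "point_mat_inv a b = (let r = complement a; s = complement b;
       Da = complement_det a; Db = complement_det b in
     mat4 [[0, fst a / Da, 0, snd r / Da], [0, snd a / Da, 0, - fst r / Da],
           [fst b / Db, 0, snd s / Db, 0], [snd b / Db, 0, - fst s / Db, 0]])"

lemma inverse_homs_swap_chart: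
  assumes "a \<noteq> (0, 0)"
  shows "inverse_homs (chart (swap_mat a)) (chart (swap_mat_inv a))"
proof (rule inverse_homs_chart)
  have "complement_det a \<noteq> 0"
    using assms by (rule complement_det_nonzero)
  fix i k :: nat assume "i < 4" "k < 4"
  then show "(\<Sum>j<4. swap_mat_inv a i j * swap_mat a j k) = (if k = i then 1 else 0)"
    "(\<Sum>j<4. swap_mat a i j * swap_mat_inv a j k) = (if k = i then 1 else 0)"
    using \<open>complement_det a \<noteq> 0\<close> unfolding less_4_cases
    by (auto simp: sum_less_4 swap_mat_def swap_mat_inv_def mat4_def Let_def field_simps)
      (auto simp: complement_det_def algebra_simps)
qed

lemma inverse_homs_fibre_chart:
  assumes "a \<noteq> (0, 0)"
  shows "inverse_homs (chart (fibre_mat a)) (chart (fibre_mat_inv a))"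
proof (rule inverse_homs_chart)
  have "complement_det a \<noteq> 0"
    using assms by (rule complement_det_nonzero)
  fix i k :: nat assume "i < 4" "k < 4"
  then show "(\<Sum>j<4. fibre_mat_inv a i j * fibre_mat a j k) = (if k = i then 1 else 0)"
    "(\<Sum>j<4. fibre_mat a i j * fibre_mat_inv a j k) = (if k = i then 1 else 0)"
    using \<open>complement_det a \<noteq> 0\<close> unfolding less_4_cases
    by (auto simp: sum_less_4 fibre_mat_def fibre_mat_inv_def mat4_def Let_def field_simps)
      (auto simp: complement_det_def algebra_simps)
qed

lemma inverse_homs_point_chart:
  assumes "a \<noteq> (0, 0)" "b \<noteq> (0, 0)"
  shows "inverse_homs (chart (point_mat a b)) (chart (point_mat_inv a b))"
proof (rule inverse_homs_chart)
  have "complement_det a \<noteq> 0" "complement_det b \<noteq> 0"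
    using assms by (simp_all add: complement_det_nonzero)
  fix i k :: nat assume "i < 4" "k < 4"
  then show "(\<Sum>j<4. point_mat_inv a b i j * point_mat a b j k) = (if k = i then 1 else 0)"
    "(\<Sum>j<4. point_mat a b i j * point_mat_inv a b j k) = (if k = i then 1 else 0)"
    using \<open>complement_det a \<noteq> 0\<close> \<open>complement_det b \<noteq> 0\<close> unfolding less_4_cases
    by (auto simp: sum_less_4 point_mat_def point_mat_inv_def mat4_def Let_def field_simps)
      (auto simp: complement_det_def algebra_simps)
qed

lemma chart_vanishing_form:
  "chart M (vanishing_form u v p) = vanishing_form (chart M u) (chart M v) p"
  by (simp add: chart_def substitute_vanishing_form)

lemma swap_chart_vars:
  "chart (swap_mat a) x0 = x2" "chart (swap_mat a) x1 = x3"
  "chart (swap_mat a) x3 = vanishing_form x0 x1 a"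
  by (simp_all add: chart_def swap_mat_def mat4_def linear_form_expand vanishing_form_def cst_uminus Let_def)

lemma fibre_chart_vars:
  "chart (fibre_mat a) x0 = x0" "chart (fibre_mat a) x1 = x1"
  "chart (fibre_mat a) x3 = vanishing_form x2 x3 a"
  by (simp_all add: chart_def fibre_mat_def mat4_def linear_form_expand vanishing_form_def cst_uminus Let_def)

lemma point_chart_vars:
  "chart (point_mat a b) x2 = vanishing_form x2 x3 b"
  "chart (point_mat a b) x3 = vanishing_form x0 x1 a"
  by (simp_all add: chart_def point_mat_def mat4_def linear_form_expand vanishing_form_def cst_uminus Let_def)

lemma is_ideal_ideal_gen: "is_ideal (ideal_gen G)"
  unfolding ideal_gen_def is_ideal_def by auto

lemma ideal_gen_subset: "G \<subseteq> ideal_gen G"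
  unfolding ideal_gen_def by auto

lemma ideal_gen_least: "is_ideal I \<Longrightarrow> G \<subseteq> I \<Longrightarrow> ideal_gen G \<subseteq> I"
  unfolding ideal_gen_def by auto

context
  fixes I :: "'a::comm_ring_1 set"
  assumes I: "is_ideal I"
begin

lemma ideal_zero: "0 \<in> I"
  using I by (simp add: is_ideal_def)

lemma ideal_add: "a \<in> I \<Longrightarrow> b \<in> I \<Longrightarrow> a + b \<in> I"
  using I by (simp add: is_ideal_def)

lemma ideal_mult_left: "a \<in> I \<Longrightarrow> r * a \<in> I"
  using I by (simp add: is_ideal_def)

lemma ideal_mult_right: "a \<in> I \<Longrightarrow> a * r \<in> I"
  using ideal_mult_left[of a r] by (simp add: mult.commute)

lemma ideal_diff: "a \<in> I \<Longrightarrow> b \<in> I \<Longrightarrow> a - b \<in> I"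
  using ideal_add[of a "- b"] ideal_mult_left[of b "- 1"] by simp

lemma ideal_prod: "finite A \<Longrightarrow> x \<in> A \<Longrightarrow> f x \<in> I \<Longrightarrow> prod f A \<in> I"
  by (simp add: prod.remove ideal_mult_right)

lemma ideal_eq_UNIV_iff_one: "I = UNIV \<longleftrightarrow> 1 \<in> I"
  using ideal_mult_left[of 1] by auto

end

lemma ideal_gen_pair_iff:
  fixes f g :: "'a::comm_ring_1"
  shows "x \<in> ideal_gen {f, g} \<longleftrightarrow> (\<exists>r s. x = r * f + s * g)"
proof
  let ?J = "{x. \<exists>r s. x = r * f + s * g}"
  have "is_ideal ?J"
    unfolding is_ideal_def
  proof (intro conjI ballI allI)
    show "0 \<in> ?J" by (auto intro!: exI[of _ 0])
  next
    fix a b assume "a \<in> ?J" "b \<in> ?J"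
    then obtain r s r' s' where "a = r * f + s * g" "b = r' * f + s' * g" by auto
    then have "a + b = (r + r') * f + (s + s') * g" by (simp add: algebra_simps)
    then show "a + b \<in> ?J" by blast
  next
    fix a t assume "a \<in> ?J"
    then obtain r s where "a = r * f + s * g" by auto
    then have "t * a = (t * r) * f + (t * s) * g" by (simp add: algebra_simps)
    then show "t * a \<in> ?J" by blast
  qed
  moreover have "f = 1 * f + 0 * g" "g = 0 * f + 1 * g"
    by simp_all
  then have "f \<in> ?J" "g \<in> ?J"
    by blast+
  ultimately have "ideal_gen {f, g} \<subseteq> ?J"
    by (intro ideal_gen_least) auto
  then show "x \<in> ideal_gen {f, g} \<Longrightarrow> \<exists>r s. x = r * f + s * g" by auto
next
  assume "\<exists>r s. x = r * f + s * g"
  moreover have "f \<in> ideal_gen {f, g}" "g \<in> ideal_gen {f, g}"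
    using ideal_gen_subset[of "{f, g}"] by auto
  ultimately show "x \<in> ideal_gen {f, g}"
    by (auto intro: ideal_add ideal_mult_left is_ideal_ideal_gen)
qed

lemma ideal_gen_pair_mult_units:
  fixes f g :: "'k::field S4"
  assumes "k \<noteq> 0" "m \<noteq> 0"
  shows "ideal_gen {cst k * f, cst m * g} = ideal_gen {f, g}"
proof -
  have inverse: "cst (1 / k) * cst k = (1 :: 'k S4)" "cst (1 / m) * cst m = (1 :: 'k S4)"
    using assms by (simp_all flip: cst_mult)
  have "(\<exists>r s. x = r * (cst k * f) + s * (cst m * g)) \<longleftrightarrow> (\<exists>r s. x = r * f + s * g)" for x
  proof
    assume "\<exists>r s. x = r * (cst k * f) + s * (cst m * g)"
    then obtain r s where "x = (r * cst k) * f + (s * cst m) * g"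
      by (auto simp: mult.assoc)
    then show "\<exists>r s. x = r * f + s * g" by blast
  next
    assume "\<exists>r s. x = r * f + s * g"
    then obtain r s where x: "x = r * f + s * g" by auto
    have cancel: "(r * cst (1 / k)) * (cst k * f) = r * f" "(s * cst (1 / m)) * (cst m * g) = s * g"
      by (simp_all only: mult.assoc[of _ "cst (1 / _)"] mult.assoc[symmetric, of "cst (1 / _)"] inverse
        mult_1)
    have "x = (r * cst (1 / k)) * (cst k * f) + (s * cst (1 / m)) * (cst m * g)"
      by (simp only: cancel x)
    then show "\<exists>r s. x = r * (cst k * f) + s * (cst m * g)" by blast
  qed
  then show ?thesis
    by (auto simp: ideal_gen_pair_iff)
qed

lemma prime_ideal_one_notin: "is_prime_ideal P \<Longrightarrow> 1 \<notin> P"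
  using ideal_eq_UNIV_iff_one[of P] by (simp add: is_prime_ideal_def)

lemma prime_ideal_prod_notin:
  assumes "is_prime_ideal P" "\<forall>x\<in>A. f x \<notin> P"
  shows "prod f A \<notin> P"
  using assms(2)
proof (induction A rule: infinite_finite_induct)
  case (insert x A)
  then show ?case using assms(1) by (auto simp: is_prime_ideal_def)
qed (use prime_ideal_one_notin[OF assms(1)] in simp_all)

lemma prime_ideal_INT_subset:
  assumes "finite X" "is_prime_ideal Q" "(\<Inter>p\<in>X. J p) \<subseteq> Q" "\<forall>p\<in>X. is_ideal (J p)"
  shows "\<exists>p\<in>X. J p \<subseteq> Q"
  using assms
proof (induction X rule: finite_induct)
  case empty then show ?case by (auto simp: is_prime_ideal_def)
next
  case (insert x X)
  show ?case
  proof (rule ccontr)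
    assume none: "\<not> ?thesis"
    then obtain a where a: "a \<in> J x" "a \<notin> Q" by auto
    have "\<not> (\<Inter>p\<in>X. J p) \<subseteq> Q" using insert none by auto
    then obtain b where b: "b \<in> (\<Inter>p\<in>X. J p)" "b \<notin> Q" by auto
    have "a * b \<in> J x"
      using a(1) insert.prems(3) by (simp add: ideal_mult_right)
    moreover have "a * b \<in> J p" if "p \<in> X" for p
      using b(1) that insert.prems(3) by (simp add: ideal_mult_left)
    ultimately have "a * b \<in> Q"
      using insert.prems(2) by blast
    then show False
      using a(2) b(2) insert.prems(1) by (auto simp: is_prime_ideal_def)
  qed
qed

subsection \<open>Transport along ring automorphisms\<close>

lemma inverse_homs_sym: "inverse_homs \<sigma> \<tau> \<Longrightarrow> inverse_homs \<tau> \<sigma>"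
  unfolding inverse_homs_def by blast

lemma inverse_homs_is_ring_hom: "inverse_homs \<sigma> \<tau> \<Longrightarrow> is_ring_hom \<sigma>"
  unfolding inverse_homs_def by blast

lemma inverse_homs_image_iff: "inverse_homs \<sigma> \<tau> \<Longrightarrow> x \<in> \<sigma> ` A \<longleftrightarrow> \<tau> x \<in> A"
  unfolding inverse_homs_def by (metis image_iff)

lemma inverse_homs_inj: "inverse_homs \<sigma> \<tau> \<Longrightarrow> inj \<sigma>"
  unfolding inverse_homs_def by (metis injI)

lemma image_INT_inverse_homs: "inverse_homs \<sigma> \<tau> \<Longrightarrow> \<sigma> ` (\<Inter>x\<in>X. J x) = (\<Inter>x\<in>X. \<sigma> ` J x)"
  by (auto simp: inverse_homs_image_iff)

context
  fixes \<sigma> \<tau> :: "'a::comm_ring_1 \<Rightarrow> 'a"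
  assumes inv: "inverse_homs \<sigma> \<tau>"
begin

private lemma homs: "is_ring_hom \<sigma>" "is_ring_hom \<tau>"
  using inverse_homs_is_ring_hom inv inverse_homs_sym by blast+

private lemma cancel [simp]: "\<sigma> (\<tau> f) = f" "\<tau> (\<sigma> f) = f"
  using inv unfolding inverse_homs_def by blast+

lemma is_ideal_image: "is_ideal I \<Longrightarrow> is_ideal (\<sigma> ` I)"
  unfolding is_ideal_def inverse_homs_image_iff[OF inv]
  by (simp add: ring_hom_zero ring_hom_add ring_hom_mult homs)

lemma is_prime_ideal_image:
  assumes P: "is_prime_ideal P"
  shows "is_prime_ideal (\<sigma> ` P)"
proof -
  have "\<sigma> ` P \<noteq> UNIV"
  proof
    assume "\<sigma> ` P = UNIV"
    then have "x \<in> P" for x using inverse_homs_image_iff[OF inv, of "\<sigma> x" P] by simp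
    then show False using P by (auto simp: is_prime_ideal_def)
  qed
  then show ?thesis
    using P unfolding is_prime_ideal_def inverse_homs_image_iff[OF inv]
    by (simp add: is_ideal_image ring_hom_mult homs)
qed

lemma dvd_image_iff: "\<sigma> p dvd g \<longleftrightarrow> p dvd \<tau> g"
proof
  assume "\<sigma> p dvd g"
  then obtain q where "g = \<sigma> p * q" by (auto elim: dvdE)
  then have "\<tau> g = p * \<tau> q" by (simp add: ring_hom_mult homs)
  then show "p dvd \<tau> g" by simp
next
  assume "p dvd \<tau> g"
  then obtain q where "\<tau> g = p * q" by (auto elim: dvdE)
  then have "\<sigma> (\<tau> g) = \<sigma> p * \<sigma> q" by (simp add: ring_hom_mult homs)
  then show "\<sigma> p dvd g" by simp
qed

lemma prime_elem_image: "prime_elem p \<Longrightarrow> prime_elem (\<sigma> p)"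
  by (auto simp: prime_elem_def dvd_image_iff ring_hom_zero ring_hom_one ring_hom_mult homs
      dest: arg_cong[of _ _ \<tau>])

lemma prime_height_le_image: "prime_height P \<le> prime_height (\<sigma> ` P)"
  unfolding prime_height_def
proof (rule SUP_least)
  fix Ps assume "Ps \<in> {Ps. prime_chain Ps \<and> last Ps = P}"
  then have Ps: "prime_chain Ps" "last Ps = P" by auto
  let ?Qs = "map ((`) \<sigma>) Ps"
  have inj: "inj \<sigma>" using inv by (rule inverse_homs_inj)
  have "prime_chain ?Qs"
    using Ps(1) unfolding prime_chain_def
    by (auto simp: is_prime_ideal_image inj_image_subset_iff[OF inj] inj_image_eq_iff[OF inj] less_le)
  moreover have "last ?Qs = \<sigma> ` P" using Ps by (simp add: last_map prime_chain_def)
  ultimately show "enat (length Ps - 1) \<le> (SUP Ps \<in> {Ps. prime_chain Ps \<and> last Ps = \<sigma> ` P}. enat (length Ps - 1))"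
    by (intro SUP_upper2[of ?Qs]) auto
qed

end

lemma image_ideal_gen:
  assumes inv: "inverse_homs \<sigma> \<tau>"
  shows "\<sigma> ` ideal_gen G = ideal_gen (\<sigma> ` G)"
proof
  show "ideal_gen (\<sigma> ` G) \<subseteq> \<sigma> ` ideal_gen G"
    by (intro ideal_gen_least is_ideal_image[OF inv] is_ideal_ideal_gen image_mono ideal_gen_subset)
next
  note inv' = inverse_homs_sym[OF inv]
  have "G \<subseteq> \<tau> ` ideal_gen (\<sigma> ` G)"
    using ideal_gen_subset[of "\<sigma> ` G"] inverse_homs_image_iff[OF inv'] by auto
  then have sub: "ideal_gen G \<subseteq> \<tau> ` ideal_gen (\<sigma> ` G)"
    by (intro ideal_gen_least is_ideal_image[OF inv'] is_ideal_ideal_gen)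
  show "\<sigma> ` ideal_gen G \<subseteq> ideal_gen (\<sigma> ` G)"
  proof (rule image_subsetI)
    fix x assume "x \<in> ideal_gen G"
    then have "x \<in> \<tau> ` ideal_gen (\<sigma> ` G)" using sub by blast
    then show "\<sigma> x \<in> ideal_gen (\<sigma> ` G)" by (simp add: inverse_homs_image_iff[OF inv'])
  qed
qed

lemma prime_height_image:
  assumes "inverse_homs \<sigma> \<tau>"
  shows "prime_height (\<sigma> ` P) = prime_height P"
proof (rule antisym)
  have "\<tau> ` \<sigma> ` P = P" using assms unfolding inverse_homs_def by (simp add: image_comp)
  then show "prime_height (\<sigma> ` P) \<le> prime_height P"
    using prime_height_le_image[OF inverse_homs_sym[OF assms], of "\<sigma> ` P"] by simp
qed (rule prime_height_le_image[OF assms])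

lemma prime_height_mono:
  assumes "is_prime_ideal Q2" "Q1 \<subseteq> Q2"
  shows "prime_height Q1 \<le> prime_height Q2"
  unfolding prime_height_def
proof (rule SUP_least)
  fix Ps assume "Ps \<in> {Ps. prime_chain Ps \<and> last Ps = Q1}"
  then have Ps: "prime_chain Ps" "last Ps = Q1" by auto
  show "enat (length Ps - 1) \<le> (SUP Ps\<in>{Ps. prime_chain Ps \<and> last Ps = Q2}. enat (length Ps - 1))"
  proof (cases "Q1 = Q2")
    case True then show ?thesis using Ps by (intro SUP_upper) auto
  next
    case False
    then have less: "last Ps \<subset> Q2" using assms Ps by auto
    have "Ps \<noteq> []" using Ps by (simp add: prime_chain_def)
    have "(Ps @ [Q2]) ! i \<subset> (Ps @ [Q2]) ! Suc i" if "Suc i < length (Ps @ [Q2])" for i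
    proof (cases "Suc i < length Ps")
      case True then show ?thesis using Ps by (simp add: nth_append prime_chain_def)
    next
      case False
      then have "i = length Ps - 1" using that by simp
      then show ?thesis using \<open>Ps \<noteq> []\<close> less by (simp add: nth_append last_conv_nth)
    qed
    then have "prime_chain (Ps @ [Q2])"
      using Ps(1) assms(1) by (auto simp: prime_chain_def)
    then have "enat (length (Ps @ [Q2]) - 1) \<le> (SUP Ps\<in>{Ps. prime_chain Ps \<and> last Ps = Q2}. enat (length Ps - 1))"
      by (intro SUP_upper) auto
    then show ?thesis by (rule order_trans[rotated]) simp
  qed
qed

subsection \<open>Point ideals\<close>

text \<open>Since \<open>x3\<close> is the outermost variable, \<open>coeff f 0\<close> is \<open>f\<close> with \<open>x3 := 0\<close>,
  and \<open>coeff (coeff f 0) 0\<close> is \<open>f\<close> with \<open>x2 = x3 := 0\<close>.\<close>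
definition x3_ideal :: "'k::field S4 set" where
  "x3_ideal = {f. coeff f 0 = 0}"

definition x2x3_ideal :: "'k::field S4 set" where
  "x2x3_ideal = {f. coeff (coeff f 0) 0 = 0}"

lemma is_prime_ideal_x3_ideal: "is_prime_ideal (x3_ideal :: 'k::field S4 set)"
  unfolding is_prime_ideal_def is_ideal_def x3_ideal_def
  by (auto simp: coeff_mult_0 set_eq_iff intro!: exI[of _ 1])

lemma is_prime_ideal_x2x3_ideal: "is_prime_ideal (x2x3_ideal :: 'k::field S4 set)"
  unfolding is_prime_ideal_def is_ideal_def x2x3_ideal_def
  by (auto simp: coeff_mult_0 set_eq_iff intro!: exI[of _ 1])

lemma is_prime_ideal_zero: "is_prime_ideal ({0} :: 'k::field S4 set)"
  unfolding is_prime_ideal_def is_ideal_def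
  by (auto simp: set_eq_iff intro!: exI[of _ 1])

lemma x2x3_ideal_eq: "x2x3_ideal = ideal_gen {x2, x3 :: 'k::field S4}"
proof
  show "ideal_gen {x2, x3} \<subseteq> (x2x3_ideal :: 'k S4 set)"
    using is_prime_ideal_x2x3_ideal unfolding is_prime_ideal_def
    by (intro ideal_gen_least) (auto simp: x2x3_ideal_def x2_def x3_def)
next
  show "x2x3_ideal \<subseteq> ideal_gen {x2, x3 :: 'k S4}"
  proof
    fix f :: "'k S4" assume "f \<in> x2x3_ideal"
    then have f0: "coeff (coeff f 0) 0 = 0" by (simp add: x2x3_ideal_def)
    obtain c q where f: "f = pCons c q" by (cases f)
    obtain c0 c' where c: "c = pCons c0 c'" by (cases c)
    have "c0 = 0" using f0 f c by simp
    then have "f = [:c':] * x2 + q * x3"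
      using f c by (simp add: x2_def x3_def mult_pCons_left mult_pCons_right mult.commute)
    then show "f \<in> ideal_gen {x2, x3}" unfolding ideal_gen_pair_iff by blast
  qed
qed

lemma two_le_prime_height_x2x3_ideal: "enat 2 \<le> prime_height (x2x3_ideal :: 'k::field S4 set)"
proof -
  let ?Ps = "[{0}, x3_ideal, x2x3_ideal :: 'k S4 set]"
  have "x3 \<in> x3_ideal" "x3 \<noteq> 0" "x2 \<in> x2x3_ideal" "x2 \<notin> x3_ideal"
    by (auto simp: x3_ideal_def x2x3_ideal_def x3_def x2_def)
  moreover have "x3_ideal \<subseteq> (x2x3_ideal :: 'k S4 set)"
    by (auto simp: x3_ideal_def x2x3_ideal_def)
  ultimately have "prime_chain ?Ps"
    using is_prime_ideal_x3_ideal is_prime_ideal_x2x3_ideal is_prime_ideal_zero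
    by (auto simp: prime_chain_def less_Suc_eq nth_Cons' x3_ideal_def)
  then show ?thesis unfolding prime_height_def
    by (intro SUP_upper2[of ?Ps]) auto
qed

lemma point_ideal_eq_image:
  assumes "a \<noteq> (0, 0)" "b \<noteq> (0, 0)"
  shows "point_ideal a b = chart (point_mat a b) ` x2x3_ideal"
  using image_ideal_gen[OF inverse_homs_point_chart[OF assms], of "{x2, x3}"]
  by (simp add: x2x3_ideal_eq point_chart_vars point_ideal_vanishing_forms insert_commute)

lemma is_prime_ideal_point_ideal:
  "a \<noteq> (0, 0) \<Longrightarrow> b \<noteq> (0, 0) \<Longrightarrow> is_prime_ideal (point_ideal a b)"
  by (simp add: point_ideal_eq_image is_prime_ideal_image[OF inverse_homs_point_chart]
      is_prime_ideal_x2x3_ideal)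

lemma prime_height_point_ideal:
  fixes a b :: "'k::field \<times> 'k"
  shows "a \<noteq> (0, 0) \<Longrightarrow> b \<noteq> (0, 0) \<Longrightarrow>
    prime_height (point_ideal a b) = prime_height (x2x3_ideal :: 'k S4 set)"
  by (simp add: point_ideal_eq_image prime_height_image[OF inverse_homs_point_chart])

lemma prime_height_ge_of_points_ideal:
  fixes X :: "(('k::field \<times> 'k) \<times> ('k \<times> 'k)) set"
  assumes "finite X" "\<forall>p\<in>X. valid_point p" "is_prime_ideal Q" "points_ideal X \<subseteq> Q"
  shows "prime_height (x2x3_ideal :: 'k S4 set) \<le> prime_height Q"
proof -
  have "\<forall>p\<in>X. is_ideal (point_ideal (fst p) (snd p))"
    by (simp add: point_ideal_def is_ideal_ideal_gen)
  then have "\<exists>p\<in>X. point_ideal (fst p) (snd p) \<subseteq> Q"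
    using prime_ideal_INT_subset[OF assms(1,3)] assms(4) by (simp add: points_ideal_def)
  then obtain p where p: "p \<in> X" "point_ideal (fst p) (snd p) \<subseteq> Q"
    by blast
  then show ?thesis
    using assms(2) prime_height_mono[OF assms(3) p(2)]
    by (simp add: prime_height_point_ideal valid_point_def)
qed

lemma ideal_height_points_ideal:
  fixes X :: "(('k::field \<times> 'k) \<times> ('k \<times> 'k)) set"
  assumes "finite X" "X \<noteq> {}" "\<forall>p\<in>X. valid_point p"
  shows "ideal_height (points_ideal X) = prime_height (x2x3_ideal :: 'k S4 set)"
  unfolding ideal_height_def
proof (rule antisym)
  obtain p where "p \<in> X" using assms(2) by auto
  then have "is_prime_ideal (point_ideal (fst p) (snd p))"
    "points_ideal X \<subseteq> point_ideal (fst p) (snd p)"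
    "prime_height (point_ideal (fst p) (snd p)) = prime_height (x2x3_ideal :: 'k S4 set)"
    using assms(3)
    by (auto simp: points_ideal_def valid_point_def is_prime_ideal_point_ideal prime_height_point_ideal)
  then show "(INF Q\<in>{Q. is_prime_ideal Q \<and> points_ideal X \<subseteq> Q}. prime_height Q)
      \<le> prime_height (x2x3_ideal :: 'k S4 set)"
    by (intro INF_lower2[of "point_ideal (fst p) (snd p)"]) auto
qed (use prime_height_ge_of_points_ideal[OF assms(1,3)] in \<open>auto intro: INF_greatest\<close>)

lemma local_height_points_ideal:
  fixes X :: "(('k::field \<times> 'k) \<times> ('k \<times> 'k)) set"
  assumes "finite X" "\<forall>p\<in>X. valid_point p" "is_prime_ideal P" "points_ideal X \<subseteq> P"
  shows "local_height (points_ideal X) P = prime_height (x2x3_ideal :: 'k S4 set)"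
  unfolding local_height_def
proof (rule antisym)
  have "\<forall>p\<in>X. is_ideal (point_ideal (fst p) (snd p))"
    by (simp add: point_ideal_def is_ideal_ideal_gen)
  then have "\<exists>p\<in>X. point_ideal (fst p) (snd p) \<subseteq> P"
    using prime_ideal_INT_subset[OF assms(1,3)] assms(4) by (simp add: points_ideal_def)
  then obtain p where "p \<in> X" "point_ideal (fst p) (snd p) \<subseteq> P"
    by blast
  then have "is_prime_ideal (point_ideal (fst p) (snd p))"
    "points_ideal X \<subseteq> point_ideal (fst p) (snd p)" "point_ideal (fst p) (snd p) \<subseteq> P"
    "prime_height (point_ideal (fst p) (snd p)) = prime_height (x2x3_ideal :: 'k S4 set)"
    using assms(2)
    by (auto simp: points_ideal_def valid_point_def is_prime_ideal_point_ideal prime_height_point_ideal)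
  then show "(INF Q\<in>{Q. is_prime_ideal Q \<and> points_ideal X \<subseteq> Q \<and> Q \<subseteq> P}. prime_height Q)
      \<le> prime_height (x2x3_ideal :: 'k S4 set)"
    by (intro INF_lower2[of "point_ideal (fst p) (snd p)"]) auto
qed (use prime_height_ge_of_points_ideal[OF assms(1,2)] in \<open>auto intro: INF_greatest\<close>)

lemma sub_const_part_mem_irrelevant:
  "f - cst (eval_at (\<lambda>_. 0) f) \<in> (irrelevant :: 'k::field S4 set)"
proof (induction f rule: S4_induct)
  have irr: "is_ideal (irrelevant :: 'k S4 set)"
    by (simp add: irrelevant_def is_ideal_ideal_gen)
  have vars: "x0 \<in> irrelevant" "x1 \<in> irrelevant" "x2 \<in> irrelevant" "(x3 :: 'k S4) \<in> irrelevant"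
    using ideal_gen_subset[of "{x0, x1, x2, x3}"] by (auto simp: irrelevant_def)
  {
    case (cst c) show ?case by (simp add: ideal_zero[OF irr])
  next
    case x0 show ?case using vars by simp
  next
    case x1 show ?case using vars by simp
  next
    case x2 show ?case using vars by simp
  next
    case x3 show ?case using vars by simp
  next
    case (add a b)
    have "a + b - cst (eval_at (\<lambda>_. 0) (a + b))
        = (a - cst (eval_at (\<lambda>_. 0) a)) + (b - cst (eval_at (\<lambda>_. 0) b))"
      by (simp add: ring_hom_add[OF is_ring_hom_eval_at] cst_add)
    then show ?case by (simp only:) (rule ideal_add[OF irr add])
  next
    case (mult a b)
    have "a * b - cst (eval_at (\<lambda>_. 0) (a * b))
        = (a - cst (eval_at (\<lambda>_. 0) a)) * b + cst (eval_at (\<lambda>_. 0) a) * (b - cst (eval_at (\<lambda>_. 0) b))"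
      by (simp add: ring_hom_mult[OF is_ring_hom_eval_at] cst_mult algebra_simps)
    then show ?case
      by (simp only:) (intro ideal_add[OF irr] ideal_mult_left[OF irr] ideal_mult_right[OF irr] mult)
  }
qed

lemma prime_ideal_misses_variable:
  assumes "is_prime_ideal P" "P \<noteq> irrelevant"
  shows "x0 \<notin> P \<or> x1 \<notin> P \<or> x2 \<notin> P \<or> (x3 :: 'k::field S4) \<notin> P"
proof (rule ccontr)
  assume "\<not> ?thesis"
  have P: "is_ideal P" using assms(1) by (simp add: is_prime_ideal_def)
  with \<open>\<not> ?thesis\<close> have "irrelevant \<subseteq> P"
    unfolding irrelevant_def by (intro ideal_gen_least) auto
  then obtain f where f: "f \<in> P" "f \<notin> irrelevant" using assms(2) by auto
  define c where "c = eval_at (\<lambda>_. 0) f"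
  have "f - cst c \<in> P"
    using sub_const_part_mem_irrelevant \<open>irrelevant \<subseteq> P\<close> by (auto simp: c_def)
  then have "cst c \<in> P" using ideal_diff[OF P f(1)] by fastforce
  then have "cst (1 / c) * cst c \<in> P" by (rule ideal_mult_left[OF P])
  moreover have "c \<noteq> 0" using sub_const_part_mem_irrelevant[of f] f(2) by (auto simp: c_def)
  then have "cst (1 / c) * cst c = (1 :: 'k S4)" by (simp flip: cst_mult)
  ultimately show False using prime_ideal_one_notin[OF assms(1)] by simp
qed

subsection \<open>Intersections of point ideals on a common line\<close>

lemma x3_dvd_iff: "(x3 :: 'k::field S4) dvd f \<longleftrightarrow> coeff f 0 = 0"
proof
  assume "x3 dvd f" then obtain q where "f = x3 * q" by (auto elim: dvdE)
  then show "coeff f 0 = 0" by (simp add: x3_def coeff_mult_0)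
next
  assume "coeff f 0 = 0"
  moreover obtain c q where "f = pCons c q" by (cases f)
  ultimately have "f = x3 * q" by (simp add: x3_def)
  then show "x3 dvd f" by simp
qed

lemma prime_elem_x3: "prime_elem (x3 :: 'k::field S4)"
  by (rule prime_elemI) (auto simp: x3_dvd_iff coeff_mult_0, simp_all add: x3_def)

lemma prime_elem_vanishing_form:
  "b \<noteq> (0, 0) \<Longrightarrow> prime_elem (vanishing_form x0 x1 b :: 'k::field S4)"
  using prime_elem_image[OF inverse_homs_swap_chart prime_elem_x3] by (simp add: swap_chart_vars)

definition projective_reps :: "('k::field \<times> 'k) set" where
  "projective_reps = {p. snd p = 1} \<union> {(1, 0)}"

definition projective_rep :: "'k::field \<times> 'k \<Rightarrow> 'k \<times> 'k" where
  "projective_rep p = (if snd p \<noteq> 0 then (fst p / snd p, 1) else (1, 0))"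

lemma projective_rep_mem: "projective_rep p \<in> projective_reps"
  by (auto simp: projective_rep_def projective_reps_def)

lemma vanishing_form_projective_rep:
  assumes "p \<noteq> (0, 0)"
  shows "\<exists>k. k \<noteq> 0 \<and> vanishing_form u v p = cst k * vanishing_form u v (projective_rep p)"
proof (cases "snd p = 0")
  case True
  then have "fst p \<noteq> 0" using assms by (cases p) auto
  moreover have "vanishing_form u v p = cst (fst p) * vanishing_form u v (projective_rep p)"
    using True by (simp add: vanishing_form_def projective_rep_def algebra_simps)
  ultimately show ?thesis by blast
next
  case False
  then have "vanishing_form u v p = cst (snd p) * vanishing_form u v (projective_rep p)"
    by (simp add: vanishing_form_def projective_rep_def algebra_simps flip: cst_mult)
  with False show ?thesis by blast
qed

lemma eval_at_vanishing_form:
  "eval_at v (vanishing_form x0 x1 b) = snd b * v 0 - fst b * v 1"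
  by (simp add: vanishing_form_def ring_hom_diff[OF is_ring_hom_eval_at] ring_hom_mult[OF is_ring_hom_eval_at])

lemma projective_reps_distinct:
  "b \<in> projective_reps \<Longrightarrow> b' \<in> projective_reps \<Longrightarrow> b' \<noteq> b \<Longrightarrow> snd b' * fst b - fst b' * snd b \<noteq> 0"
  by (cases b; cases b') (auto simp: projective_reps_def)

lemma prod_vanishing_forms_dvd:
  assumes "finite B" "B \<subseteq> projective_reps" "\<forall>b\<in>B. vanishing_form x0 x1 b dvd (c :: 'k::field S4)"
  shows "(\<Prod>b\<in>B. vanishing_form x0 x1 b) dvd c"
  using assms
proof (induction B rule: finite_induct)
  case (insert b B)
  let ?V = "\<lambda>b. vanishing_form x0 x1 b :: 'k S4"
  have "(\<Prod>b\<in>B. ?V b) dvd c" using insert by auto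
  then obtain q where q: "c = (\<Prod>b\<in>B. ?V b) * q" by (auto elim: dvdE)
  have b: "b \<in> projective_reps" "b \<noteq> (0, 0)" using insert by (auto simp: projective_reps_def)
  define ev where "ev = eval_at (\<lambda>i. if i = 0 then fst b else snd b)"
  have "ev (\<Prod>b\<in>B. ?V b) = (\<Prod>b'\<in>B. snd b' * fst b - fst b' * snd b)"
    by (simp add: ev_def ring_hom_prod[OF is_ring_hom_eval_at] eval_at_vanishing_form)
  also have "\<dots> \<noteq> 0"
    using insert b(1) projective_reps_distinct[OF b(1)] by (auto simp: prod_zero_iff)
  finally have "\<not> ?V b dvd (\<Prod>b\<in>B. ?V b)"
    by (auto elim!: dvdE simp: ev_def ring_hom_mult[OF is_ring_hom_eval_at] eval_at_vanishing_form)
  moreover have "?V b dvd (\<Prod>b\<in>B. ?V b) * q" using insert q by auto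
  ultimately have "?V b dvd q"
    using prime_elem_vanishing_form[OF b(2)] by (simp add: prime_elem_dvd_mult_iff)
  then show ?case using q insert(1,2) by (auto simp: mult.commute mult_dvd_mono)
qed simp

lemma vanishing_form_x0x1_const: "vanishing_form x0 x1 b = [:coeff (vanishing_form x0 x1 b) 0:]"
  by (simp add: vanishing_form_def cst_def x0_def x1_def)

text \<open>Modulo \<open>x3\<close>, membership in \<open>(x3, m\<^sub>b)\<close> means that the \<open>x3\<close>-free part is divisible by
  the prime \<open>m\<^sub>b\<close>; distinct \<open>m\<^sub>b\<close> are non-associated, so their product divides it.\<close>
lemma INT_ideal_gen_x3_subset:
  assumes "finite B" "B \<subseteq> projective_reps"
  shows "(\<Inter>b\<in>B. ideal_gen {x3, vanishing_form x0 x1 b})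
    \<subseteq> ideal_gen {x3 :: 'k::field S4, \<Prod>b\<in>B. vanishing_form x0 x1 b}"
proof
  fix g :: "'k S4" assume g: "g \<in> (\<Inter>b\<in>B. ideal_gen {x3, vanishing_form x0 x1 b})"
  obtain c q where g_pCons: "g = pCons c q" by (cases g)
  then have g_eq: "g = q * x3 + [:c:]" by (simp add: x3_def)
  have "vanishing_form x0 x1 b dvd [:c:]" if "b \<in> B" for b
  proof -
    have "g \<in> ideal_gen {x3, vanishing_form x0 x1 b}" using g that by blast
    then obtain r s where "g = r * x3 + s * vanishing_form x0 x1 b"
      unfolding ideal_gen_pair_iff by blast
    then have "coeff g 0 = coeff (r * x3) 0 + coeff (s * vanishing_form x0 x1 b) 0"
      by simp
    moreover have "coeff (r * x3) 0 = 0"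
      using x3_dvd_iff[of "r * x3"] by simp
    ultimately have "c = coeff s 0 * coeff (vanishing_form x0 x1 b) 0"
      using g_pCons by (simp add: coeff_mult_0)
    then have "[:c:] = [:coeff s 0:] * vanishing_form x0 x1 b"
      by (subst vanishing_form_x0x1_const) (simp add: mult.commute)
    then show ?thesis by (simp only:) (rule dvd_triv_right)
  qed
  then have "(\<Prod>b\<in>B. vanishing_form x0 x1 b) dvd [:c:]"
    using prod_vanishing_forms_dvd[OF assms] by blast
  then obtain w where "[:c:] = (\<Prod>b\<in>B. vanishing_form x0 x1 b) * w"
    by (elim dvdE)
  then have "g = q * x3 + w * (\<Prod>b\<in>B. vanishing_form x0 x1 b)"
    using g_eq by (simp add: mult.commute)
  then show "g \<in> ideal_gen {x3, \<Prod>b\<in>B. vanishing_form x0 x1 b}"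
    unfolding ideal_gen_pair_iff by blast
qed

lemma INT_ideal_gen_subset_image:
  assumes inv: "inverse_homs \<sigma> \<tau>" and B: "finite B" "B \<subseteq> projective_reps"
  shows "(\<Inter>b\<in>B. ideal_gen {\<sigma> x3, \<sigma> (vanishing_form x0 x1 b)})
    \<subseteq> ideal_gen {\<sigma> x3, \<Prod>b\<in>B. \<sigma> (vanishing_form x0 x1 b)}"
proof -
  have hom: "is_ring_hom \<sigma>" using inv by (rule inverse_homs_is_ring_hom)
  have "\<sigma> ` (\<Inter>b\<in>B. ideal_gen {x3, vanishing_form x0 x1 b})
      \<subseteq> \<sigma> ` ideal_gen {x3, \<Prod>b\<in>B. vanishing_form x0 x1 b}"
    by (intro image_mono INT_ideal_gen_x3_subset B)
  moreover have "\<sigma> ` (\<Inter>b\<in>B. ideal_gen {x3, vanishing_form x0 x1 b})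
      = (\<Inter>b\<in>B. ideal_gen {\<sigma> x3, \<sigma> (vanishing_form x0 x1 b)})"
    by (simp only: image_INT_inverse_homs[OF inv] image_ideal_gen[OF inv] image_insert image_empty)
  moreover have "\<sigma> ` ideal_gen {x3, \<Prod>b\<in>B. vanishing_form x0 x1 b}
      = ideal_gen {\<sigma> x3, \<Prod>b\<in>B. \<sigma> (vanishing_form x0 x1 b)}"
    by (simp only: image_ideal_gen[OF inv] image_insert image_empty ring_hom_prod[OF hom])
  ultimately show ?thesis
    by (simp only:)
qed

lemma INT_ideal_gen_x0x1_subset:
  assumes "a \<noteq> (0, 0)" "finite B" "B \<subseteq> projective_reps"
  shows "(\<Inter>b\<in>B. ideal_gen {vanishing_form x0 x1 a, vanishing_form x2 x3 b})
    \<subseteq> ideal_gen {vanishing_form x0 x1 a, \<Prod>b\<in>B. vanishing_form x2 x3 (b :: 'k::field \<times> 'k)}"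
  using INT_ideal_gen_subset_image[OF inverse_homs_swap_chart[OF assms(1)] assms(2,3)]
  by (simp add: swap_chart_vars chart_vanishing_form)

lemma INT_ideal_gen_x2x3_subset:
  assumes "a \<noteq> (0, 0)" "finite B" "B \<subseteq> projective_reps"
  shows "(\<Inter>b\<in>B. ideal_gen {vanishing_form x2 x3 a, vanishing_form x0 x1 b})
    \<subseteq> ideal_gen {vanishing_form x2 x3 a, \<Prod>b\<in>B. vanishing_form x0 x1 (b :: 'k::field \<times> 'k)}"
  using INT_ideal_gen_subset_image[OF inverse_homs_fibre_chart[OF assms(1)] assms(2,3)]
  by (simp add: fibre_chart_vars chart_vanishing_form)

subsection \<open>Local generators\<close>

lemma vanishing_forms_proportional:
  fixes a b :: "'k::field \<times> 'k"
  assumes P: "is_ideal P" and uv: "u \<notin> P \<or> v \<notin> P"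
    and a: "a \<noteq> (0, 0)" "vanishing_form u v a \<in> P" and b: "b \<noteq> (0, 0)" "vanishing_form u v b \<in> P"
  shows "\<exists>k. k \<noteq> 0 \<and> vanishing_form u v b = cst k * vanishing_form u v a"
proof -
  obtain a0 a1 b0 b1 where ab: "a = (a0, a1)" "b = (b0, b1)" by (cases a, cases b)
  define d where "d = a1 * b0 - a0 * b1"
  have "cst b0 * vanishing_form u v a - cst a0 * vanishing_form u v b = cst d * u"
    "cst b1 * vanishing_form u v a - cst a1 * vanishing_form u v b = cst d * v"
    by (simp_all add: ab d_def vanishing_form_def cst_mult cst_diff algebra_simps)
  then have "cst d * u \<in> P" "cst d * v \<in> P"
    using a(2) b(2) by (metis ideal_diff[OF P] ideal_mult_left[OF P])+
  then have "cst (1 / d) * cst d * u \<in> P" "cst (1 / d) * cst d * v \<in> P"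
    by (simp_all add: mult.assoc ideal_mult_left[OF P])
  with uv have "d = 0" by (cases "d = 0") (auto simp flip: cst_mult)
  define k where "k = (if a1 \<noteq> 0 then b1 / a1 else b0 / a0)"
  have "b0 = k * a0 \<and> b1 = k * a1"
    using \<open>d = 0\<close> a(1) by (auto simp: k_def d_def ab field_simps)
  then have "k \<noteq> 0" "vanishing_form u v b = cst k * vanishing_form u v a"
    using b(1) by (auto simp: ab vanishing_form_def cst_mult algebra_simps)
  then show ?thesis by blast
qed

lemma ideal_gen_vanishing_forms_normalize:
  fixes a a' b :: "'k::field \<times> 'k"
  assumes "is_ideal P" "u \<notin> P \<or> v \<notin> P" "a \<noteq> (0, 0)" "vanishing_form u v a \<in> P"
    "a' \<noteq> (0, 0)" "vanishing_form u v a' \<in> P" "b \<noteq> (0, 0)"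
  shows "ideal_gen {vanishing_form u v a', vanishing_form w z b}
    = ideal_gen {vanishing_form u v a, vanishing_form w z (projective_rep b)}"
proof -
  obtain k where "k \<noteq> 0" "vanishing_form u v a' = cst k * vanishing_form u v a"
    using vanishing_forms_proportional[OF assms(1-6)] by blast
  moreover obtain m where "m \<noteq> 0" "vanishing_form w z b = cst m * vanishing_form w z (projective_rep b)"
    using vanishing_form_projective_rep[OF assms(7)] by blast
  ultimately show ?thesis by (simp add: ideal_gen_pair_mult_units)
qed

lemma points_ideal_local_generators_oriented:
  fixes X :: "(('k::field \<times> 'k) \<times> ('k \<times> 'k)) set"
    and A B :: "('k \<times> 'k) \<times> ('k \<times> 'k) \<Rightarrow> 'k \<times> 'k" and u v w z :: "'k S4"
  assumes X: "finite X" and nonzero: "\<forall>p\<in>X. A p \<noteq> (0, 0) \<and> B p \<noteq> (0, 0)"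
    and J: "\<forall>p\<in>X. point_ideal (fst p) (snd p)
      = ideal_gen {vanishing_form u v (A p), vanishing_form w z (B p)}"
    and INT_subset: "\<And>a C. a \<noteq> (0, 0) \<Longrightarrow> finite C \<Longrightarrow> C \<subseteq> projective_reps \<Longrightarrow>
      (\<Inter>b\<in>C. ideal_gen {vanishing_form u v a, vanishing_form w z b})
        \<subseteq> ideal_gen {vanishing_form u v a, \<Prod>b\<in>C. vanishing_form w z b}"
    and uv: "u \<notin> P \<or> v \<notin> P" and P: "is_prime_ideal P" "points_ideal X \<subseteq> P"
  shows "\<exists>f g. {f, g} \<subseteq> points_ideal X \<and>
    (\<forall>h\<in>points_ideal X. \<exists>t. t \<notin> P \<and> t * h \<in> ideal_gen {f, g})"
proof -
  let ?J = "\<lambda>p. point_ideal (fst p) (snd p)"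
  let ?U = "\<lambda>p. vanishing_form u v (A p)" and ?V = "vanishing_form w z"
  have P_ideal: "is_ideal P" using P(1) by (simp add: is_prime_ideal_def)
  have J_ideal: "\<forall>p\<in>X. is_ideal (?J p)" by (simp add: point_ideal_def is_ideal_ideal_gen)
  then have "\<exists>p\<in>X. ?J p \<subseteq> P"
    using prime_ideal_INT_subset[OF X P(1)] P(2) by (simp add: points_ideal_def)
  then obtain p0 where p0: "p0 \<in> X" "?J p0 \<subseteq> P" by blast
  define L where "L = ?U p0"
  have "L \<in> P" using p0 J ideal_gen_subset by (fastforce simp: L_def)
  define X1 where "X1 = {p\<in>X. ?U p \<in> P}"
  define T where "T = (\<Prod>p\<in>X - X1. ?U p)"
  define C where "C = projective_rep ` B ` X1"
  define M where "M = (\<Prod>b\<in>C. ?V b)"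
  have C: "finite C" "C \<subseteq> projective_reps"
    using X by (auto simp: C_def X1_def projective_rep_mem)
  have "T \<notin> P"
    unfolding T_def by (rule prime_ideal_prod_notin[OF P(1)]) (auto simp: X1_def)
  have J_X1: "?J p = ideal_gen {L, ?V (projective_rep (B p))}" if "p \<in> X1" for p
  proof -
    have p: "p \<in> X" "?U p \<in> P" using that by (auto simp: X1_def)
    then have "A p0 \<noteq> (0, 0)" "A p \<noteq> (0, 0)" "B p \<noteq> (0, 0)" using nonzero p0(1) by auto
    from ideal_gen_vanishing_forms_normalize[OF P_ideal uv this(1) \<open>L \<in> P\<close>[unfolded L_def]
        this(2) p(2) this(3)]
    show ?thesis using J p(1) by (simp add: L_def)
  qed
  have "T * L \<in> ?J p \<and> T * M \<in> ?J p" if "p \<in> X" for p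
  proof (cases "p \<in> X1")
    case True
    then have "L \<in> ?J p" "?V (projective_rep (B p)) \<in> ?J p"
      using ideal_gen_subset[of "{L, ?V (projective_rep (B p))}"] by (auto simp: J_X1)
    moreover have "projective_rep (B p) \<in> C" using True by (simp add: C_def)
    ultimately show ?thesis
      using J_ideal that C(1) by (simp add: M_def ideal_mult_left ideal_prod)
  next
    case False
    then have "?U p \<in> ?J p" using J that ideal_gen_subset by fastforce
    then have "T \<in> ?J p" using J_ideal X that False by (simp add: T_def ideal_prod)
    then show ?thesis using J_ideal that by (simp add: ideal_mult_right)
  qed
  then have "{T * L, T * M} \<subseteq> points_ideal X"
    by (auto simp: points_ideal_def)
  moreover have "T * h \<in> ideal_gen {T * L, T * M}" if "h \<in> points_ideal X" for h
  proof -
    have "h \<in> (\<Inter>b\<in>C. ideal_gen {L, ?V b})"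
      using that J_X1 by (auto simp: points_ideal_def C_def X1_def)
    moreover have "A p0 \<noteq> (0, 0)" using nonzero p0(1) by blast
    ultimately have "h \<in> ideal_gen {L, M}"
      using INT_subset[OF _ C, of "A p0"] by (auto simp: L_def M_def)
    then obtain r s where "h = r * L + s * M" by (auto simp: ideal_gen_pair_iff)
    then have "T * h = r * (T * L) + s * (T * M)" by (simp add: algebra_simps)
    then show ?thesis unfolding ideal_gen_pair_iff by blast
  qed
  ultimately show ?thesis using \<open>T \<notin> P\<close> by blast
qed

lemma points_ideal_local_generators:
  fixes X :: "(('k::field \<times> 'k) \<times> ('k \<times> 'k)) set"
  assumes X: "finite X" "\<forall>p\<in>X. valid_point p"
    and P: "is_prime_ideal P" "P \<noteq> irrelevant" "points_ideal X \<subseteq> P"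
  shows "\<exists>f g. {f, g} \<subseteq> points_ideal X \<and>
    (\<forall>h\<in>points_ideal X. \<exists>t. t \<notin> P \<and> t * h \<in> ideal_gen {f, g})"
proof -
  have nonzero: "\<forall>p\<in>X. fst p \<noteq> (0, 0) \<and> snd p \<noteq> (0, 0)"
    using X(2) by (simp add: valid_point_def)
  consider "x0 \<notin> P \<or> x1 \<notin> P" | "x2 \<notin> P \<or> x3 \<notin> P"
    using prime_ideal_misses_variable[OF P(1,2)] by blast
  then show ?thesis
  proof cases
    case 1
    show ?thesis
      by (rule points_ideal_local_generators_oriented[where A = fst and B = snd, OF X(1) nonzero _
            INT_ideal_gen_x0x1_subset 1 P(1,3)])
        (simp add: point_ideal_vanishing_forms)
  next
    case 2
    from nonzero have "\<forall>p\<in>X. snd p \<noteq> (0, 0) \<and> fst p \<noteq> (0, 0)" by blast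
    then show ?thesis
      by (rule points_ideal_local_generators_oriented[where A = snd and B = fst, OF X(1) _ _
            INT_ideal_gen_x2x3_subset 2 P(1,3)])
        (simp add: point_ideal_vanishing_forms insert_commute)
  qed
qed

lemma lci_UNIV: "lci (UNIV :: 'k::field S4 set)"
proof -
  have no_primes: "{Q. is_prime_ideal Q \<and> (UNIV :: 'k S4 set) \<subseteq> Q} = {}"
    by (auto simp: is_prime_ideal_def)
  have "ideal_height (UNIV :: 'k S4 set) = \<infinity>"
    unfolding ideal_height_def no_primes by (simp add: top_enat_def)
  then show ?thesis by (simp add: lci_def)
qed

theorem lemma4p1:
  fixes X :: "(('k::{alg_closed_field, field_char_0} \<times> 'k) \<times> ('k \<times> 'k)) set"
  assumes "finite X"
    and "\<forall>p\<in>X. valid_point p"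
  shows "lci (points_ideal X)"
proof (cases "X = {}")
  case True
  then show ?thesis by (simp add: points_ideal_def lci_UNIV)
next
  case False
  show ?thesis unfolding lci_def
  proof (intro allI impI)
    fix c P assume c: "ideal_height (points_ideal X) = enat c"
      and "is_prime_ideal P \<and> P \<noteq> irrelevant \<and> points_ideal X \<subseteq> P"
    then have P: "is_prime_ideal P" "P \<noteq> irrelevant" "points_ideal X \<subseteq> P" by simp_all
    have height: "prime_height (x2x3_ideal :: 'k S4 set) = enat c"
      using ideal_height_points_ideal[OF assms(1) False assms(2)] c by simp
    then have "2 \<le> c"
      using two_le_prime_height_x2x3_ideal[where 'k = 'k] by simp
    obtain f g where "{f, g} \<subseteq> points_ideal X"
      "\<forall>h\<in>points_ideal X. \<exists>t. t \<notin> P \<and> t * h \<in> ideal_gen {f, g}"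
      using points_ideal_local_generators[OF assms P] by blast
    moreover have "card {f, g} \<le> c"
      using \<open>2 \<le> c\<close> by (cases "f = g") simp_all
    moreover have "local_height (points_ideal X) P = enat c"
      using local_height_points_ideal[OF assms P(1,3)] height by simp
    ultimately show "local_ci (points_ideal X) P c"
      unfolding local_ci_def by (intro conjI exI[of _ "{f, g}"]) simp_all
  qed
qed

end
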